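(* Let $(M,d)$ be a compact metric space, $\mu$ a probability measure on $M$, $k:M\times M\to[0,1]$ measurable, $M^s\subseteq M$ measurable, and $\rho>0$. For a probability measure $\nu$ on $M$ and measurable $v:M\setminus M^s\to[0,1]$ define, for $x\in M\setminus M^s$, $$(T_\nu v)(x)=\frac{\int_{M^s}k(x,y)\,d\nu(y)+\int_{M\setminus M^s}k(x,y)v(y)\,d\nu(y)}{\rho+\int_M k(x,y)\,d\nu(y)}.$$ Let $v^*:M\setminus M^s\to[0,1]$ be the unique measurable map with $T_\mu v^*=v^*$. For a finite sample $S=\{x_1,\dots,x_n\}$ let $\mu_S$ be the empirical measure $\mu_S(P)=\frac1n\sum_{i=1}^n\mathbf 1(x_i\in P)$. Then for every $x\in M\setminus M^s$ and every $\epsilon>0$, $$\Pr_{S\sim\mu^n}\Big[\big|(T_\mu v^* )(x)-(T_{\mu_S}v^* )(x)\big|>\epsilon\Big]<4\exp\Big(-\frac{n\rho^2\epsilon^2}{9}\Big),$$ where $S\sim\mu^n$ means $x_1,\dots,x_n$ are i.i.d. with law $\mu$. *)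

theory Defs
  imports "HOL-Probability.Probability"
begin

definition T_op :: "'a measure \<Rightarrow> ('a \<Rightarrow> 'a \<Rightarrow> real) \<Rightarrow> 'a set \<Rightarrow> real
    \<Rightarrow> ('a \<Rightarrow> real) \<Rightarrow> 'a \<Rightarrow> real" where
  "T_op \<nu> k Ms \<rho> v x =
     ((LINT y:Ms|\<nu>. k x y) + (LINT y:(space \<nu> - Ms)|\<nu>. k x y * v y))
     / (\<rho> + (LINT y|\<nu>. k x y))"

definition empirical_measure :: "nat \<Rightarrow> (nat \<Rightarrow> 'a::topological_space) \<Rightarrow> 'a measure" where
  "empirical_measure n xs =
     measure_of UNIV (sets borel)
       (\<lambda>P. ennreal ((\<Sum>i<n. indicator P (xs i)) / real n))"

end

theory Submission
  imports Defs
begin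

text \<open>
  Put \<open>w y = k x y\<close> on \<open>Ms\<close> and \<open>w y = k x y * v y\<close> off \<open>Ms\<close>. Then
  \<open>T\<^sub>\<nu> v x = a\<^sub>\<nu> / (\<rho> + b\<^sub>\<nu>)\<close> with \<open>a\<^sub>\<nu> = \<integral>w d\<nu>\<close> and \<open>b\<^sub>\<nu> = \<integral>k x d\<nu>\<close>, where
  \<open>0 \<le> w \<le> k x \<le> 1\<close>. On \<open>0 \<le> a \<le> b\<close> the map \<open>(a, b) \<mapsto> a / (\<rho> + b)\<close> is
  \<open>1/\<rho>\<close>-Lipschitz in each coordinate, so a deviation of more than \<open>\<epsilon>\<close> forces
  one of the two empirical means \<open>a\<^sub>\<mu>\<^sub>S\<close>, \<open>b\<^sub>\<mu>\<^sub>S\<close> to deviate from its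
  expectation by at least \<open>\<rho>\<epsilon>/2\<close>. Hoeffding's inequality bounds each of these
  events by \<open>2 exp (-n\<rho>\<^sup>2\<epsilon>\<^sup>2/2)\<close>.
\<close>

lemma empirical_measure_eq_distr_pmf_of_set:
  assumes "n > 0"
  shows "empirical_measure n xs = distr (measure_pmf (pmf_of_set {..<n})) borel xs"
proof -
  let ?N = "distr (measure_pmf (pmf_of_set {..<n})) borel xs"
  have "?N = measure_of (space ?N) (sets ?N) (emeasure ?N)"
    by (rule measure_of_of_measure[symmetric])
  also have "\<dots> = measure_of UNIV (sets borel) (emeasure ?N)"
    by simp
  also have "\<dots> = empirical_measure n xs"
    unfolding empirical_measure_def
  proof (rule measure_of_eq)
    fix P :: "'a set"
    assume "P \<in> sigma_sets UNIV (sets borel)"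
    then have P: "P \<in> sets borel"
      by (simp add: sets.sigma_sets_eq[of borel, simplified])
    have "(\<Sum>i<n. indicator P (xs i)) = real (card ({..<n} \<inter> xs -` P))"
      using sum_indicator_eq_card[of "{..<n}" "xs -` P"] by (simp add: indicator_def)
    moreover have "emeasure ?N P = emeasure (measure_pmf (pmf_of_set {..<n})) (xs -` P)"
      using P by (subst emeasure_distr) auto
    moreover have "\<dots> = card ({..<n} \<inter> xs -` P) / card {..<n}"
      using assms by (subst emeasure_pmf_of_set) auto
    ultimately show "emeasure ?N P = ennreal ((\<Sum>i<n. indicator P (xs i)) / real n)"
      by (simp add: ennreal_of_nat_eq_real_of_nat divide_ennreal)
  qed simp
  finally show ?thesis
    by simp
qed

lemma prob_space_empirical_measure: "n > 0 \<Longrightarrow> prob_space (empirical_measure n xs)"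
  by (simp add: empirical_measure_eq_distr_pmf_of_set prob_space.prob_space_distr
      prob_space_measure_pmf)

lemma sets_empirical_measure:
  "n > 0 \<Longrightarrow> sets (empirical_measure n xs) = sets borel"
  by (simp add: empirical_measure_eq_distr_pmf_of_set)

lemma integral_empirical_measure:
  fixes g :: "'a::topological_space \<Rightarrow> real"
  assumes "n > 0" "g \<in> borel_measurable borel"
  shows "integral\<^sup>L (empirical_measure n xs) g = (\<Sum>i<n. g (xs i)) / n"
  using assms by (simp add: empirical_measure_eq_distr_pmf_of_set integral_distr,
      subst integral_pmf_of_set) auto

lemma indep_vars_PiM_components:
  assumes "I \<noteq> {}" "\<And>i. i \<in> I \<Longrightarrow> prob_space (M i)"
  shows "prob_space.indep_vars (PiM I M) M (\<lambda>i \<omega>. \<omega> i) I"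
proof -
  let ?P = "PiM I M"
  interpret P: prob_space ?P
    using assms by (intro prob_space_PiM)
  have "distr ?P ?P (\<lambda>\<omega>. \<lambda>i\<in>I. \<omega> i) = distr ?P ?P (\<lambda>\<omega>. \<omega>)"
    by (rule distr_cong) (auto simp: space_PiM)
  also have "\<dots> = PiM I (\<lambda>i. distr ?P (M i) (\<lambda>\<omega>. \<omega> i))"
    using assms by (auto intro!: PiM_cong simp: distr_PiM_component)
  finally show ?thesis
    using assms by (subst P.indep_vars_iff_distr_eq_PiM') auto
qed

lemma Hoeffding_sample_mean_abs_ge:
  fixes f :: "'a \<Rightarrow> real" and a b t :: real and n :: nat
  assumes \<mu>: "prob_space \<mu>" and f: "f \<in> borel_measurable \<mu>"
    and f_range: "\<And>y. y \<in> space \<mu> \<Longrightarrow> f y \<in> {a..b}" and "a < b"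
    and "n > 0" and "t \<ge> 0"
  shows "measure (PiM {..<n} (\<lambda>_. \<mu>))
      {xs \<in> space (PiM {..<n} (\<lambda>_. \<mu>)). \<bar>(\<Sum>i<n. f (xs i)) / n - integral\<^sup>L \<mu> f\<bar> \<ge> t}
    \<le> 2 * exp (-2 * n * t\<^sup>2 / (b - a)\<^sup>2)"
proof -
  let ?P = "PiM {..<n} (\<lambda>_. \<mu>)"
  interpret P: prob_space ?P
    using \<mu> by (intro prob_space_PiM)
  have "0 \<in> {..<n}"
    using \<open>n > 0\<close> by simp
  have component: "distr ?P \<mu> (\<lambda>\<omega>. \<omega> i) = \<mu>" if "i < n" for i
    using \<mu> that distr_PiM_component[of "{..<n}" "\<lambda>_. \<mu>" i] by simp
  have distr_f: "distr ?P borel (\<lambda>\<omega>. f (\<omega> i)) = distr \<mu> borel f" if "i < n" for i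
    using f that by (subst component[OF that, symmetric], subst distr_distr) (auto simp: comp_def)
  have "P.indep_vars (\<lambda>_. \<mu>) (\<lambda>i \<omega>. \<omega> i) {..<n}"
    using \<mu> \<open>0 \<in> {..<n}\<close> by (intro indep_vars_PiM_components) auto
  then have indep: "P.indep_vars (\<lambda>_. borel) (\<lambda>i \<omega>. f (\<omega> i)) {..<n}"
    by (rule P.indep_vars_compose2) (use f in simp)
  have mean: "integral\<^sup>L ?P (\<lambda>\<omega>. f (\<omega> 0)) = integral\<^sup>L \<mu> f"
    using f \<open>n > 0\<close> by (subst component[OF \<open>n > 0\<close>, symmetric], subst integral_distr) auto
  interpret Hoeffding_ineq_iid ?P "{..<n}" "\<lambda>i \<omega>. f (\<omega> i)" "\<lambda>\<omega>. f (\<omega> 0)" a b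
      "integral\<^sup>L ?P (\<lambda>\<omega>. f (\<omega> 0))"
  proof unfold_locales
    show "distr ?P borel (\<lambda>\<omega>. f (\<omega> i)) = distr ?P borel (\<lambda>\<omega>. f (\<omega> 0))" if "i \<in> {..<n}" for i
      using that \<open>n > 0\<close> by (simp add: distr_f)
    show "AE \<omega> in ?P. f (\<omega> 0) \<in> {a..b}"
      using f_range \<open>0 \<in> {..<n}\<close> by (intro AE_I2) (auto simp: space_PiM PiE_iff)
  qed (use indep f \<open>0 \<in> {..<n}\<close> in simp_all)
  show ?thesis
    using Hoeffding_ineq_abs_ge'[OF \<open>t \<ge> 0\<close> \<open>a < b\<close>] \<open>n > 0\<close> by (simp add: mean lessThan_empty_iff)
qed

lemma abs_ratio_diff_le:
  fixes a b a' b' \<rho> :: real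
  assumes "\<rho> > 0" "0 \<le> a" "a \<le> b" "0 \<le> b'"
  shows "\<bar>a / (\<rho> + b) - a' / (\<rho> + b')\<bar> \<le> (\<bar>a - a'\<bar> + \<bar>b - b'\<bar>) / \<rho>"
proof -
  have decomp: "a / (\<rho> + b) - a' / (\<rho> + b')
      = (a - a') / (\<rho> + b') + a / (\<rho> + b) * ((b' - b) / (\<rho> + b'))"
    using assms by (simp add: divide_simps) (simp add: algebra_simps)
  have "\<bar>(a - a') / (\<rho> + b')\<bar> \<le> \<bar>a - a'\<bar> / \<rho>"
    using assms by (simp add: abs_divide frac_le)
  moreover have "\<bar>a / (\<rho> + b)\<bar> \<le> 1"
    using assms by (simp add: abs_divide)
  moreover have "\<bar>(b' - b) / (\<rho> + b')\<bar> \<le> \<bar>b - b'\<bar> / \<rho>"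
    using assms by (simp add: abs_divide abs_minus_commute frac_le)
  ultimately have "\<bar>(a - a') / (\<rho> + b')\<bar> + \<bar>a / (\<rho> + b)\<bar> * \<bar>(b' - b) / (\<rho> + b')\<bar>
      \<le> \<bar>a - a'\<bar> / \<rho> + 1 * (\<bar>b - b'\<bar> / \<rho>)"
    by (intro add_mono mult_mono) auto
  moreover have "\<bar>a / (\<rho> + b) - a' / (\<rho> + b')\<bar>
      \<le> \<bar>(a - a') / (\<rho> + b')\<bar> + \<bar>a / (\<rho> + b)\<bar> * \<bar>(b' - b) / (\<rho> + b')\<bar>"
    unfolding decomp abs_mult[symmetric] by (rule abs_triangle_ineq)
  ultimately show ?thesis
    by (simp add: add_divide_distrib)
qed

lemma T_op_eq_ratio_integrals:
  fixes \<nu> :: "'a measure" and k :: "'a \<Rightarrow> 'a \<Rightarrow> real" and v :: "'a \<Rightarrow> real"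
  assumes \<nu>: "finite_measure \<nu>" and k: "(\<lambda>y. k x y) \<in> borel_measurable \<nu>"
    and k_range: "\<And>y. k x y \<in> {0..1}" and Ms: "Ms \<in> sets \<nu>"
    and v: "v \<in> borel_measurable \<nu>" and v_range: "\<And>y. y \<notin> Ms \<Longrightarrow> v y \<in> {0..1}"
  shows "T_op \<nu> k Ms \<rho> v x =
    (\<integral>y. k x y * (if y \<in> Ms then 1 else v y) \<partial>\<nu>) / (\<rho> + (\<integral>y. k x y \<partial>\<nu>))"
proof -
  interpret finite_measure \<nu>
    by (rule \<nu>)
  have on_Ms: "integrable \<nu> (\<lambda>y. indicator Ms y *\<^sub>R k x y)"
    using k_range k Ms by (intro integrable_const_bound[where B=1]) (auto simp: indicator_def)
  have off_Ms: "integrable \<nu> (\<lambda>y. indicator (space \<nu> - Ms) y *\<^sub>R (k x y * v y))"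
  proof (rule integrable_const_bound[where B=1])
    show "AE y in \<nu>. norm (indicator (space \<nu> - Ms) y *\<^sub>R (k x y * v y)) \<le> (1::real)"
      using k_range v_range by (intro AE_I2) (auto simp: indicator_def abs_mult intro: mult_le_one)
  qed (use k v Ms in auto)
  have "(LINT y:Ms|\<nu>. k x y) + (LINT y:(space \<nu> - Ms)|\<nu>. k x y * v y)
      = (\<integral>y. indicator Ms y *\<^sub>R k x y + indicator (space \<nu> - Ms) y *\<^sub>R (k x y * v y) \<partial>\<nu>)"
    unfolding set_lebesgue_integral_def using on_Ms off_Ms by simp
  also have "\<dots> = (\<integral>y. k x y * (if y \<in> Ms then 1 else v y) \<partial>\<nu>)"
    by (rule Bochner_Integration.integral_cong) (auto simp: indicator_def)
  finally show ?thesis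
    unfolding T_op_def by simp
qed

lemma T_op_empirical_measure:
  fixes k :: "'a::topological_space \<Rightarrow> 'a \<Rightarrow> real" and v :: "'a \<Rightarrow> real"
  assumes "n > 0" and k: "(\<lambda>y. k x y) \<in> borel_measurable borel"
    and k_range: "\<And>y. k x y \<in> {0..1}" and Ms: "Ms \<in> sets borel"
    and v: "v \<in> borel_measurable borel" and v_range: "\<And>y. y \<notin> Ms \<Longrightarrow> v y \<in> {0..1}"
  shows "T_op (empirical_measure n xs) k Ms \<rho> v x =
    ((\<Sum>i<n. k x (xs i) * (if xs i \<in> Ms then 1 else v (xs i))) / n)
      / (\<rho> + (\<Sum>i<n. k x (xs i)) / n)"
proof -
  have meas: "borel_measurable (empirical_measure n xs) = borel_measurable borel"
    using \<open>n > 0\<close> by (intro measurable_cong_sets) (simp_all add: sets_empirical_measure)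
  have w: "(\<lambda>y. k x y * (if y \<in> Ms then 1 else v y)) \<in> borel_measurable borel"
    using k v Ms by measurable
  show ?thesis
    using \<open>n > 0\<close> k k_range Ms v v_range w
    by (subst T_op_eq_ratio_integrals)
      (simp_all add: meas sets_empirical_measure prob_space_empirical_measure
        prob_space.finite_measure integral_empirical_measure)
qed

lemma ratio_of_sample_means_deviation:
  fixes f g :: "'a \<Rightarrow> real" and \<rho> \<epsilon> :: real and n :: nat
  assumes \<mu>: "prob_space \<mu>" and f: "f \<in> borel_measurable \<mu>" and g: "g \<in> borel_measurable \<mu>"
    and f_nonneg: "\<And>y. y \<in> space \<mu> \<Longrightarrow> 0 \<le> f y"
    and f_le_g: "\<And>y. y \<in> space \<mu> \<Longrightarrow> f y \<le> g y"
    and g_le_1: "\<And>y. y \<in> space \<mu> \<Longrightarrow> g y \<le> 1"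
    and "\<rho> > 0" "\<epsilon> \<ge> 0" "n > 0"
  shows "measure (PiM {..<n} (\<lambda>_. \<mu>))
      {xs \<in> space (PiM {..<n} (\<lambda>_. \<mu>)).
        \<epsilon> < \<bar>integral\<^sup>L \<mu> f / (\<rho> + integral\<^sup>L \<mu> g)
              - ((\<Sum>i<n. f (xs i)) / n) / (\<rho> + (\<Sum>i<n. g (xs i)) / n)\<bar>}
    \<le> 4 * exp (- (n * \<rho>\<^sup>2 * \<epsilon>\<^sup>2) / 2)" (is "measure _ ?S \<le> _")
proof -
  let ?P = "PiM {..<n} (\<lambda>_. \<mu>)"
  interpret \<mu>: prob_space \<mu>
    by (rule \<mu>)
  interpret P: prob_space ?P
    using \<mu> by (intro prob_space_PiM)
  define t where "t = \<rho> * \<epsilon> / 2"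
  have "t \<ge> 0"
    using \<open>\<rho> > 0\<close> \<open>\<epsilon> \<ge> 0\<close> by (simp add: t_def)
  define dev where
    "dev (h :: 'a \<Rightarrow> real) = {xs \<in> space ?P. t \<le> \<bar>(\<Sum>i<n. h (xs i)) / n - integral\<^sup>L \<mu> h\<bar>}"
    for h
  have dev_sets: "dev h \<in> sets ?P" if "h \<in> borel_measurable \<mu>" for h
    unfolding dev_def using that by measurable
  have dev_le: "measure ?P (dev h) \<le> 2 * exp (-2 * n * t\<^sup>2)"
    if "h \<in> borel_measurable \<mu>" "\<And>y. y \<in> space \<mu> \<Longrightarrow> h y \<in> {0..1}" for h
    using Hoeffding_sample_mean_abs_ge[OF \<mu> that, of n t] \<open>n > 0\<close> \<open>t \<ge> 0\<close>
    by (simp add: dev_def)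
  have integrable: "integrable \<mu> (h :: 'a \<Rightarrow> real)"
    if "h \<in> borel_measurable \<mu>" "\<And>y. y \<in> space \<mu> \<Longrightarrow> \<bar>h y\<bar> \<le> 1" for h
    by (rule \<mu>.integrable_const_bound[where B=1]) (use that in auto)
  have f_range: "f y \<in> {0..1}" and g_range: "g y \<in> {0..1}" if "y \<in> space \<mu>" for y
    using f_nonneg[OF that] f_le_g[OF that] g_le_1[OF that] by auto
  have "0 \<le> integral\<^sup>L \<mu> f"
    using f_nonneg by (intro integral_nonneg_AE AE_I2) auto
  have "integral\<^sup>L \<mu> f \<le> integral\<^sup>L \<mu> g"
    using f_le_g f_range g_range by (intro integral_mono integrable f g) auto
  have deviation: "?S \<subseteq> dev f \<union> dev g"
  proof
    fix xs
    assume xs: "xs \<in> ?S"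
    show "xs \<in> dev f \<union> dev g"
    proof (rule ccontr)
      assume "xs \<notin> dev f \<union> dev g"
      then have "\<bar>integral\<^sup>L \<mu> f - (\<Sum>i<n. f (xs i)) / n\<bar> < t"
        and "\<bar>integral\<^sup>L \<mu> g - (\<Sum>i<n. g (xs i)) / n\<bar> < t"
        using xs by (auto simp: dev_def abs_minus_commute)
      moreover have "0 \<le> (\<Sum>i<n. g (xs i)) / n"
        using xs g_range by (auto simp: space_PiM intro!: divide_nonneg_nonneg sum_nonneg)
      ultimately have "\<bar>integral\<^sup>L \<mu> f / (\<rho> + integral\<^sup>L \<mu> g)
          - ((\<Sum>i<n. f (xs i)) / n) / (\<rho> + (\<Sum>i<n. g (xs i)) / n)\<bar> < (t + t) / \<rho>"
        using \<open>\<rho> > 0\<close> \<open>0 \<le> integral\<^sup>L \<mu> f\<close> \<open>integral\<^sup>L \<mu> f \<le> integral\<^sup>L \<mu> g\<close>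
        by (intro le_less_trans[OF abs_ratio_diff_le] divide_strict_right_mono add_strict_mono)
      then show False
        using xs \<open>\<rho> > 0\<close> by (simp add: t_def)
    qed
  qed
  have "measure ?P ?S \<le> measure ?P (dev f \<union> dev g)"
    using deviation dev_sets[OF f] dev_sets[OF g] by (intro P.finite_measure_mono) auto
  also have "\<dots> \<le> measure ?P (dev f) + measure ?P (dev g)"
    using dev_sets[OF f] dev_sets[OF g] by (rule measure_Un_le)
  also have "\<dots> \<le> 4 * exp (-2 * n * t\<^sup>2)"
    using dev_le[OF f f_range] dev_le[OF g g_range] by simp
  also have "-2 * n * t\<^sup>2 = - (n * \<rho>\<^sup>2 * \<epsilon>\<^sup>2) / 2"
    by (simp add: t_def power_divide power_mult_distrib)
  finally show ?thesis .
qed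

lemma T_op_empirical_deviation_le:
  fixes \<mu> :: "'a::topological_space measure" and k :: "'a \<Rightarrow> 'a \<Rightarrow> real"
    and v :: "'a \<Rightarrow> real" and \<rho> \<epsilon> :: real and n :: nat
  assumes \<mu>: "prob_space \<mu>" and sets_\<mu>: "sets \<mu> = sets borel"
    and k: "(\<lambda>y. k x y) \<in> borel_measurable borel" and k_range: "\<And>y. k x y \<in> {0..1}"
    and Ms: "Ms \<in> sets borel"
    and v: "v \<in> borel_measurable borel" and v_range: "\<And>y. y \<notin> Ms \<Longrightarrow> v y \<in> {0..1}"
    and "\<rho> > 0" "\<epsilon> \<ge> 0" "n > 0"
  shows "measure (PiM {..<n} (\<lambda>_. \<mu>))
      {xs \<in> space (PiM {..<n} (\<lambda>_. \<mu>)).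
        \<epsilon> < \<bar>T_op \<mu> k Ms \<rho> v x - T_op (empirical_measure n xs) k Ms \<rho> v x\<bar>}
    \<le> 4 * exp (- (n * \<rho>\<^sup>2 * \<epsilon>\<^sup>2) / 2)"
proof -
  define w where "w y = k x y * (if y \<in> Ms then 1 else v y)" for y
  have meas: "borel_measurable \<mu> = borel_measurable borel"
    using sets_\<mu> by (rule measurable_cong_sets) simp
  have w: "w \<in> borel_measurable borel"
    unfolding w_def using k v Ms by measurable
  have w_bounds: "0 \<le> w y" "w y \<le> k x y" for y
    using k_range[of y] v_range[of y] by (auto simp: w_def intro: mult_left_le)
  have T_\<mu>: "T_op \<mu> k Ms \<rho> v x = integral\<^sup>L \<mu> w / (\<rho> + (\<integral>y. k x y \<partial>\<mu>))"
    unfolding w_def using \<mu> k k_range Ms sets_\<mu> v v_range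
    by (intro T_op_eq_ratio_integrals) (simp_all add: meas prob_space.finite_measure)
  have T_S: "T_op (empirical_measure n xs) k Ms \<rho> v x
      = ((\<Sum>i<n. w (xs i)) / n) / (\<rho> + (\<Sum>i<n. k x (xs i)) / n)" for xs
    unfolding w_def using \<open>n > 0\<close> k k_range Ms v v_range
    by (intro T_op_empirical_measure) auto
  show ?thesis
    unfolding T_\<mu> T_S using \<open>\<rho> > 0\<close> \<open>\<epsilon> \<ge> 0\<close> \<open>n > 0\<close> k w w_bounds k_range
    by (intro ratio_of_sample_means_deviation \<mu>) (auto simp: meas)
qed

theorem lemma3:
  fixes \<mu> :: "'a::metric_space measure"
    and k :: "'a \<Rightarrow> 'a \<Rightarrow> real"
    and Ms :: "'a set" and \<rho> :: real
    and vs :: "'a \<Rightarrow> real"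
    and x :: 'a and \<epsilon> :: real and n :: nat
  assumes compact: "compact (UNIV :: 'a set)"
    and prob: "prob_space \<mu>" and sets_mu: "sets \<mu> = sets borel"
    and k_meas: "(\<lambda>(x, y). k x y) \<in> borel_measurable (borel \<Otimes>\<^sub>M borel)"
    and k_range: "\<And>x y. k x y \<in> {0..1}"
    and Ms_meas: "Ms \<in> sets borel"
    and rho_pos: "\<rho> > 0"
    and vs_meas: "vs \<in> borel_measurable borel"
    and vs_range: "\<And>y. y \<notin> Ms \<Longrightarrow> vs y \<in> {0..1}"
    and vs_fix: "\<And>y. y \<notin> Ms \<Longrightarrow> T_op \<mu> k Ms \<rho> vs y = vs y"
    and x_notin: "x \<notin> Ms"
    and eps_pos: "\<epsilon> > 0"
  shows "measure (PiM {..<n} (\<lambda>_. \<mu>))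
           {xs \<in> space (PiM {..<n} (\<lambda>_. \<mu>)).
              \<bar>T_op \<mu> k Ms \<rho> vs x - T_op (empirical_measure n xs) k Ms \<rho> vs x\<bar> > \<epsilon>}
         < 4 * exp (- (real n * \<rho>\<^sup>2 * \<epsilon>\<^sup>2) / 9)"
proof (cases "n = 0")
  case True
  have "prob_space (PiM {..<n} (\<lambda>_. \<mu>))"
    using prob by (intro prob_space_PiM)
  then show ?thesis
    by (rule le_less_trans[OF prob_space.prob_le_1]) (simp add: True)
next
  case False
  have "(\<lambda>y. k x y) \<in> borel_measurable borel"
    using measurable_Pair2[OF k_meas] by simp
  then have "measure (PiM {..<n} (\<lambda>_. \<mu>))
           {xs \<in> space (PiM {..<n} (\<lambda>_. \<mu>)).
              \<bar>T_op \<mu> k Ms \<rho> vs x - T_op (empirical_measure n xs) k Ms \<rho> vs x\<bar> > \<epsilon>}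
        \<le> 4 * exp (- (n * \<rho>\<^sup>2 * \<epsilon>\<^sup>2) / 2)"
    using False prob sets_mu k_range Ms_meas vs_meas vs_range rho_pos eps_pos
    by (intro T_op_empirical_deviation_le) auto
  also have "\<dots> < 4 * exp (- (real n * \<rho>\<^sup>2 * \<epsilon>\<^sup>2) / 9)"
    using False rho_pos eps_pos by simp
  finally show ?thesis .
qed

end
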